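(* Let $G$ be a non-regular simple graph on $n$ vertices, and let $u,v$ be vertices of $G$ with $d_G(u)<d_G(v)$. Let $R:=V(G)\setminus\{u,v\}$, $X:=N(u)\setminus N[v]$, $W:=N(u)\cap N(v)$, and $Z:=\{w\in R: w\notin N(u)\cup N(v)\}$. Let $k$ be an integer with $2\le k\le n-2$. If $k-1\le |X|+|W|+|Z|$, then $F_k(G)$ is non-regular.
   Context: For a simple graph $G=(V,E)$ on $n$ vertices and an integer $1\le k<n$, the $k$-token graph $F_k(G)$ is the graph whose vertices are all $k$-element subsets of $V$, two such subsets $A,B$ being adjacent whenever their symmetric difference $A\triangle B$ is a pair $\{a,b\}$ with $a$ adjacent to $b$ in $G$. $N(x)$ is the set of neighbors of $x$ in $G$, $N[x]=N(x)\cup\{x\}$, and $d_G(x)=|N(x)|$. *)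

theory Defs
  imports Main
begin

definition simple_graph :: "'a set \<Rightarrow> ('a \<Rightarrow> 'a \<Rightarrow> bool) \<Rightarrow> bool" where
  "simple_graph V E \<longleftrightarrow> finite V \<and>
     (\<forall>x y. E x y \<longrightarrow> x \<in> V \<and> y \<in> V \<and> x \<noteq> y) \<and>
     (\<forall>x y. E x y \<longrightarrow> E y x)"

definition nbhd :: "'a set \<Rightarrow> ('a \<Rightarrow> 'a \<Rightarrow> bool) \<Rightarrow> 'a \<Rightarrow> 'a set" where
  "nbhd V E x = {y \<in> V. E x y}"

definition cnbhd :: "'a set \<Rightarrow> ('a \<Rightarrow> 'a \<Rightarrow> bool) \<Rightarrow> 'a \<Rightarrow> 'a set" where
  "cnbhd V E x = insert x (nbhd V E x)"

definition degree :: "'a set \<Rightarrow> ('a \<Rightarrow> 'a \<Rightarrow> bool) \<Rightarrow> 'a \<Rightarrow> nat" where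
  "degree V E x = card (nbhd V E x)"

definition regular :: "'a set \<Rightarrow> ('a \<Rightarrow> 'a \<Rightarrow> bool) \<Rightarrow> bool" where
  "regular V E \<longleftrightarrow> (\<forall>x\<in>V. \<forall>y\<in>V. degree V E x = degree V E y)"

definition token_vertices :: "'a set \<Rightarrow> nat \<Rightarrow> 'a set set" where
  "token_vertices V k = {A. A \<subseteq> V \<and> card A = k}"

definition token_adj :: "('a \<Rightarrow> 'a \<Rightarrow> bool) \<Rightarrow> 'a set \<Rightarrow> 'a set \<Rightarrow> bool" where
  "token_adj E A B \<longleftrightarrow> (\<exists>a b. (A - B) \<union> (B - A) = {a, b} \<and> E a b)"

definition token_graph_regular :: "'a set \<Rightarrow> ('a \<Rightarrow> 'a \<Rightarrow> bool) \<Rightarrow> nat \<Rightarrow> bool" where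
  "token_graph_regular V E k = regular (token_vertices V k) (token_adj E)"

end

theory Submission
  imports Defs
begin

text \<open>The degree of a k-set A in F_k(G) is the number of edges of G leaving A: each such
edge ab yields the neighbour (A - {a}) \<union> {b}. Take S of size k - 1 avoiding u and v such
that every neighbour of v in S is also a neighbour of u; such an S exists because X, W and Z
consist of vertices of this kind. Adding a vertex x to S changes the number of leaving edges
by d(x) - 2|N(x) \<inter> S|, so S \<union> {v} has strictly larger degree in F_k(G) than S \<union> {u}.\<close>

definition cut_edges :: "'a set \<Rightarrow> ('a \<Rightarrow> 'a \<Rightarrow> bool) \<Rightarrow> 'a set \<Rightarrow> ('a \<times> 'a) set" where
  "cut_edges V E A = {(a, b). a \<in> A \<and> b \<in> V - A \<and> E a b}"

lemma simple_graph_finite_nbhd: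
  assumes "simple_graph V E"
  shows "finite (nbhd V E x)"
  using assms unfolding simple_graph_def nbhd_def by auto

lemma finite_cut_edges:
  assumes "simple_graph V E"
  shows "finite (cut_edges V E A)"
  by (rule finite_subset[of _ "V \<times> V"]) (use assms in \<open>auto simp: simple_graph_def cut_edges_def\<close>)

lemma token_adj_iff_swap:
  assumes "simple_graph V E" and "finite A" and "finite B" and "card A = card B"
  shows "token_adj E A B \<longleftrightarrow> (\<exists>a b. a \<in> A \<and> b \<notin> A \<and> E a b \<and> B = insert b (A - {a}))"
proof
  assume "token_adj E A B"
  then obtain a b where ab: "(A - B) \<union> (B - A) = {a, b}" "E a b"
    unfolding token_adj_def by blast
  have sym: "E b a" and "a \<noteq> b"
    using assms(1) ab(2) unfolding simple_graph_def by auto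
  have "card (A - B) = card (B - A)"
    using assms(2-4) by (simp add: card_Diff_subset_Int Int_commute)
  moreover have "card (A - B) + card (B - A) = card ((A - B) \<union> (B - A))"
    using assms(2,3) by (subst card_Un_disjoint) auto
  then have "card (A - B) + card (B - A) = 2"
    using ab(1) \<open>a \<noteq> b\<close> by simp
  ultimately have "card (A - B) = 1" "card (B - A) = 1" by simp_all
  then obtain x y where x: "A - B = {x}" and y: "B - A = {y}"
    by (meson card_1_singletonE)
  have "(x = a \<and> y = b) \<or> (x = b \<and> y = a)"
    using ab(1) x y by (simp add: doubleton_eq_iff insert_commute)
  then have "E x y" using ab(2) sym by blast
  moreover have "B = insert y (A - {x})"
    using x y by (auto simp: set_eq_iff)
  ultimately show "\<exists>a b. a \<in> A \<and> b \<notin> A \<and> E a b \<and> B = insert b (A - {a})"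
    using x y by blast
next
  assume "\<exists>a b. a \<in> A \<and> b \<notin> A \<and> E a b \<and> B = insert b (A - {a})"
  then obtain a b where "a \<in> A" "b \<notin> A" "E a b" and B: "B = insert b (A - {a})" by blast
  then have "(A - B) \<union> (B - A) = {a, b}" by auto
  with \<open>E a b\<close> show "token_adj E A B" unfolding token_adj_def by blast
qed

lemma token_degree_eq_card_cut_edges:
  assumes sg: "simple_graph V E" and AV: "A \<subseteq> V"
  shows "degree (token_vertices V (card A)) (token_adj E) A = card (cut_edges V E A)"
proof -
  have finV: "finite V" using sg simple_graph_def by auto
  then have finA: "finite A" using AV finite_subset by auto
  define swap where "swap = (\<lambda>(a, b). insert b (A - {a}))"
  have "inj_on swap (cut_edges V E A)"
  proof (rule inj_onI, clarify)
    fix a b a' b'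
    assume "(a, b) \<in> cut_edges V E A" "(a', b') \<in> cut_edges V E A"
      and eq: "swap (a, b) = swap (a', b')"
    then have h: "a \<in> A" "b \<notin> A" "a' \<in> A" "b' \<notin> A" by (auto simp: cut_edges_def)
    have eq': "insert b (A - {a}) = insert b' (A - {a'})" using eq by (simp add: swap_def)
    then have "b = b'" using h by blast
    have "A - {a} = insert b (A - {a}) - {b}" using h by auto
    also have "\<dots> = A - {a'}" using eq' \<open>b = b'\<close> h by auto
    finally have "A - {a} = A - {a'}" .
    with h have "a = a'" by blast
    with \<open>b = b'\<close> show "a = a' \<and> b = b'" by simp
  qed
  moreover have "nbhd (token_vertices V (card A)) (token_adj E) A = swap ` cut_edges V E A"
  proof (rule set_eqI)
    fix B
    have card_swap: "card (insert b (A - {a})) = card A" if "a \<in> A" "b \<notin> A" for a b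
      using that finA by (simp add: card_Diff_singleton) (metis Suc_pred card_gt_0_iff empty_iff)
    show "B \<in> nbhd (token_vertices V (card A)) (token_adj E) A \<longleftrightarrow> B \<in> swap ` cut_edges V E A"
    proof
      assume "B \<in> nbhd (token_vertices V (card A)) (token_adj E) A"
      then have BV: "B \<subseteq> V" "card B = card A" and "token_adj E A B"
        unfolding nbhd_def token_vertices_def by auto
      moreover have "finite B" using BV finV finite_subset by auto
      ultimately obtain a b where "a \<in> A" "b \<notin> A" "E a b" "B = insert b (A - {a})"
        using token_adj_iff_swap[OF sg finA] by metis
      then show "B \<in> swap ` cut_edges V E A"
        using BV unfolding swap_def cut_edges_def by (auto intro!: image_eqI[of _ _ "(a, b)"])
    next
      assume "B \<in> swap ` cut_edges V E A"
      then obtain a b where ab: "a \<in> A" "b \<in> V" "b \<notin> A" "E a b" and B: "B = insert b (A - {a})"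
        unfolding swap_def cut_edges_def by auto
      then have "token_adj E A B"
        using token_adj_iff_swap[OF sg finA, of B] finA card_swap by auto
      then show "B \<in> nbhd (token_vertices V (card A)) (token_adj E) A"
        using AV ab B card_swap unfolding nbhd_def token_vertices_def by auto
    qed
  qed
  ultimately show ?thesis unfolding degree_def by (simp add: card_image)
qed

lemma card_cut_edges_insert:
  assumes sg: "simple_graph V E" and SV: "S \<subseteq> V" and xV: "x \<in> V" and xS: "x \<notin> S"
  shows "card (cut_edges V E (insert x S)) + 2 * card (S \<inter> nbhd V E x)
       = card (cut_edges V E S) + degree V E x"
proof -
  have sym: "\<And>x y. E x y \<Longrightarrow> E y x" and irr: "\<And>x y. E x y \<Longrightarrow> x \<in> V \<and> y \<in> V \<and> x \<noteq> y"
    using sg unfolding simple_graph_def by auto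
  have finN: "finite (nbhd V E x)" using simple_graph_finite_nbhd[OF sg] .
  define into_x where "into_x = (S \<inter> nbhd V E x) \<times> {x}"
  define out_of_x where "out_of_x = {x} \<times> (nbhd V E x - S)"
  have into: "into_x \<subseteq> cut_edges V E S"
    unfolding into_x_def cut_edges_def nbhd_def using xS xV sym by auto
  have "cut_edges V E (insert x S) = (cut_edges V E S - into_x) \<union> out_of_x"
    unfolding cut_edges_def into_x_def out_of_x_def nbhd_def using irr sym xS by auto
  moreover have "card ((cut_edges V E S - into_x) \<union> out_of_x)
      = card (cut_edges V E S) - card into_x + card out_of_x"
  proof -
    have "(cut_edges V E S - into_x) \<inter> out_of_x = {}"
      using xS unfolding cut_edges_def out_of_x_def by auto
    then show ?thesis
      using finite_cut_edges[OF sg] into finN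
      by (simp add: card_Un_disjoint card_Diff_subset finite_subset out_of_x_def)
  qed
  moreover have "card into_x \<le> card (cut_edges V E S)"
    using into finite_cut_edges[OF sg] by (rule card_mono[rotated])
  moreover have "card (nbhd V E x - S) + card (S \<inter> nbhd V E x) = degree V E x"
    unfolding degree_def using finN
    by (metis Int_commute card_Diff_subset_Int card_mono Int_lower1 le_add_diff_inverse2 finite_Int)
  ultimately show ?thesis
    by (simp add: into_x_def out_of_x_def card_cartesian_product)
qed

lemma token_degree_insert_less:
  assumes sg: "simple_graph V E" and SV: "S \<subseteq> V"
    and "x \<in> V" "y \<in> V" "x \<notin> S" "y \<notin> S"
    and sub: "S \<inter> nbhd V E y \<subseteq> S \<inter> nbhd V E x"
    and less: "degree V E x < degree V E y"
  shows "degree (token_vertices V (Suc (card S))) (token_adj E) (insert x S)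
       < degree (token_vertices V (Suc (card S))) (token_adj E) (insert y S)"
proof -
  have finS: "finite S" using sg SV finite_subset unfolding simple_graph_def by auto
  have "card (S \<inter> nbhd V E y) \<le> card (S \<inter> nbhd V E x)"
    using sub finS by (simp add: card_mono)
  then have "card (cut_edges V E (insert x S)) < card (cut_edges V E (insert y S))"
    using card_cut_edges_insert[OF sg SV \<open>x \<in> V\<close> \<open>x \<notin> S\<close>]
      card_cut_edges_insert[OF sg SV \<open>y \<in> V\<close> \<open>y \<notin> S\<close>] less by linarith
  moreover have "card (insert z S) = Suc (card S)" if "z \<notin> S" for z
    using finS that by simp
  ultimately show ?thesis
    using token_degree_eq_card_cut_edges[OF sg, of "insert x S"]
      token_degree_eq_card_cut_edges[OF sg, of "insert y S"] assms(3-6) SV by simp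
qed

lemma card_neighbour_classes_le:
  assumes sg: "simple_graph V E"
  shows "card (nbhd V E u - cnbhd V E v) + card (nbhd V E u \<inter> nbhd V E v)
           + card {w \<in> V - {u, v}. w \<notin> nbhd V E u \<union> nbhd V E v}
         \<le> card {w \<in> V - {u, v}. E v w \<longrightarrow> E u w}"
proof -
  have finV: "finite V" and irr: "\<And>x y. E x y \<Longrightarrow> x \<in> V \<and> y \<in> V \<and> x \<noteq> y"
    using sg unfolding simple_graph_def by auto
  have finN: "finite (nbhd V E u)" using simple_graph_finite_nbhd[OF sg] .
  let ?X = "nbhd V E u - cnbhd V E v" and ?W = "nbhd V E u \<inter> nbhd V E v"
    and ?Z = "{w \<in> V - {u, v}. w \<notin> nbhd V E u \<union> nbhd V E v}"
  have "card ?X + card ?W = card (?X \<union> ?W)"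
    using finN by (subst card_Un_disjoint) (auto simp: cnbhd_def)
  moreover have "card (?X \<union> ?W) + card ?Z = card (?X \<union> ?W \<union> ?Z)"
    using finN finV by (subst card_Un_disjoint) auto
  ultimately have "card ?X + card ?W + card ?Z = card (?X \<union> ?W \<union> ?Z)" by simp
  also have "\<dots> \<le> card {w \<in> V - {u, v}. E v w \<longrightarrow> E u w}"
    by (rule card_mono) (use finV irr in \<open>auto simp: nbhd_def cnbhd_def\<close>)
  finally show ?thesis .
qed

theorem lemma2:
  fixes V :: "'a set" and E :: "'a \<Rightarrow> 'a \<Rightarrow> bool" and u v :: 'a and k :: nat
  assumes "simple_graph V E"
    and "\<not> regular V E"
    and "u \<in> V" and "v \<in> V"
    and "degree V E u < degree V E v"
    and "2 \<le> k" and "k \<le> card V - 2"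
    and "k - 1 \<le> card (nbhd V E u - cnbhd V E v)
                 + card (nbhd V E u \<inter> nbhd V E v)
                 + card {w \<in> V - {u, v}. w \<notin> nbhd V E u \<union> nbhd V E v}"
  shows "\<not> token_graph_regular V E k"
proof
  assume reg: "token_graph_regular V E k"
  obtain S where SY: "S \<subseteq> {w \<in> V - {u, v}. E v w \<longrightarrow> E u w}" and cS: "card S = k - 1"
  proof -
    have "k - 1 \<le> card {w \<in> V - {u, v}. E v w \<longrightarrow> E u w}"
      using card_neighbour_classes_le[OF assms(1), of u v] assms(8) by linarith
    then show ?thesis using obtain_subset_with_card_n that by blast
  qed
  then have SV: "S \<subseteq> V" and "u \<notin> S" "v \<notin> S" and k: "Suc (card S) = k"
    using assms(6) by auto
  moreover have "S \<inter> nbhd V E v \<subseteq> S \<inter> nbhd V E u"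
    using SY unfolding nbhd_def by auto
  ultimately have less: "degree (token_vertices V k) (token_adj E) (insert u S)
      < degree (token_vertices V k) (token_adj E) (insert v S)"
    using token_degree_insert_less[OF assms(1) SV assms(3,4)] assms(5) by metis
  have "finite S" using SV assms(1) finite_subset unfolding simple_graph_def by auto
  then have "insert u S \<in> token_vertices V k" "insert v S \<in> token_vertices V k"
    using \<open>u \<notin> S\<close> \<open>v \<notin> S\<close> k SV assms(3,4) unfolding token_vertices_def by auto
  with reg have "degree (token_vertices V k) (token_adj E) (insert u S)
      = degree (token_vertices V k) (token_adj E) (insert v S)"
    unfolding token_graph_regular_def regular_def by blast
  with less show False by simp
qed

end
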